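(* Let $(\nu_n)_{n\ge1}$ be a sequence of probability measures on $\mathbb{Z}$. The following are equivalent: (1) for every $\delta>0$, $\displaystyle\limsup_{n\to\infty}\ \sup_{\delta<|t|\le 1/2}|\hat{\nu}_n(t)|<1$; (2) there exist a constant $C>0$ and an integer $N_0$ such that $|\hat{\nu}_n(t)|\le e^{-Ct^2}$ for all $n>N_0$ and all $t\in[-1/2,1/2)$.
   Context: The Fourier transform of a probability measure $\nu$ on $\mathbb{Z}$ is $\hat{\nu}(t)=\sum_{k\in\mathbb{Z}}\nu(k)e^{2\pi ikt}$, $t\in[-1/2,1/2)$. *)

theory Defs
  imports "HOL-Probability.Probability"
begin

definition fourier_pmf :: "int pmf \<Rightarrow> real \<Rightarrow> complex" where
  "fourier_pmf \<nu> t = (\<Sum>\<^sub>\<infinity>k::int. complex_of_real (pmf \<nu> k) * exp (2 * pi * \<i> * of_int k * complex_of_real t))"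

end

theory Submission
  imports Defs
begin

(* Write F = fourier_pmf \<nu> and g(t) = 1 - |F(t)| >= 0.
   (2) => (1) is immediate: for \<delta> < |t| <= 1/2 the Gaussian bound gives
   |F(t)| <= exp(-C \<delta>^2) < 1 (the endpoint t = 1/2 is handled by 1-periodicity).
   (1) => (2) rests on the doubling inequality g(2t) <= 4 g(t), which follows by
   averaging the pointwise estimate 1 - Re(w^2) <= 4 (1 - Re w) for |w| = 1 over
   \<nu>, after rotating F(t) onto the positive real axis.  If g >= \<eta> on the annulus
   1/4 < |t| <= 1/2, then repeated doubling yields g(t) >= \<eta> t^2 on all of
   |t| <= 1/2, hence |F(t)| <= 1 - \<eta> t^2 <= exp(-\<eta> t^2).  Condition (1) with
   \<delta> = 1/4 provides such an \<eta> > 0 for all large n. *)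

lemma pmf_has_sum_1: "(pmf p has_sum 1) UNIV"
proof -
  have abs: "Infinite_Set_Sum.abs_summable_on (pmf p) UNIV" by (rule pmf_abs_summable)
  then have "(\<lambda>x. norm (pmf p x)) summable_on UNIV" using abs_summable_equivalent by blast
  then have "pmf p summable_on UNIV" by (rule abs_summable_summable)
  moreover have "infsum (pmf p) UNIV = 1"
    using infsetsum_infsum[OF abs] infsetsum_pmf_eq_1[of p UNIV] by simp
  ultimately show ?thesis using has_sum_infsum by fastforce
qed

lemma has_sum_diff:
  fixes f g :: "'a \<Rightarrow> 'b::topological_ab_group_add"
  assumes "(f has_sum a) A" and "(g has_sum b) A"
  shows "((\<lambda>x. f x - g x) has_sum (a - b)) A"
proof -
  have "((\<lambda>x. - g x) has_sum (- b)) A" using assms(2) has_sum_uminus[of g A "- b"] by simp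
  from has_sum_add[OF assms(1) this] show ?thesis by simp
qed

lemma norm_character: "cmod (exp (2 * pi * \<i> * of_int k * complex_of_real t)) = 1"
proof -
  have "2 * pi * \<i> * of_int k * complex_of_real t = \<i> * complex_of_real (2 * pi * k * t)"
    by simp
  then show ?thesis by (simp only: norm_exp_i_times)
qed

lemma fourier_pmf_has_sum:
  "((\<lambda>k. complex_of_real (pmf \<nu> k) * exp (2 * pi * \<i> * of_int k * complex_of_real t))
     has_sum fourier_pmf \<nu> t) UNIV"
proof -
  have "(\<lambda>k. norm (complex_of_real (pmf \<nu> k) * exp (2 * pi * \<i> * of_int k * complex_of_real t)))
          summable_on UNIV"
    using pmf_has_sum_1[of \<nu>] by (simp add: norm_mult norm_character summable_on_def; blast)
  then have "(\<lambda>k. complex_of_real (pmf \<nu> k) * exp (2 * pi * \<i> * of_int k * complex_of_real t))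
               summable_on UNIV"
    by (rule abs_summable_summable)
  then show ?thesis unfolding fourier_pmf_def by simp
qed

lemma fourier_pmf_periodic: "fourier_pmf \<nu> (t + 1) = fourier_pmf \<nu> t"
proof -
  have "exp (2 * pi * \<i> * of_int k * complex_of_real (t + 1))
          = exp (2 * pi * \<i> * of_int k * complex_of_real t)" for k :: int
  proof -
    have "2 * pi * \<i> * of_int k * complex_of_real (t + 1)
            = 2 * pi * \<i> * of_int k * complex_of_real t + (2 * of_int k * pi) * \<i>"
      by (simp add: algebra_simps)
    then have "exp (2 * pi * \<i> * of_int k * complex_of_real (t + 1))
            = exp (2 * pi * \<i> * of_int k * complex_of_real t) * exp ((2 * of_int k * pi) * \<i>)"
      by (simp only: exp_add)
    also have "exp ((2 * of_int k * pi) * \<i>) = 1"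
      by (rule exp_integer_2pi) simp
    finally show ?thesis by simp
  qed
  then show ?thesis unfolding fourier_pmf_def by simp
qed

lemma unit_complex_doubling:
  assumes "cmod w = 1"
  shows "1 - Re (w\<^sup>2) \<le> 4 * (1 - Re w)"
proof -
  obtain a b where w: "w = Complex a b" by (cases w)
  have "a\<^sup>2 + b\<^sup>2 = 1" using assms w by (simp add: cmod_def)
  moreover have "Re (w\<^sup>2) = a\<^sup>2 - b\<^sup>2" using w by (simp add: power2_eq_square)
  moreover have "(a - 1)\<^sup>2 \<ge> 0" by simp
  ultimately show ?thesis using w by (simp add: power2_eq_square algebra_simps)
qed

text \<open>Multiplying F(t) by a unimodular c makes
  c F(t) = |F(t)| real, and then the pointwise inequality is averaged against \<nu>.\<close>
lemma fourier_pmf_doubling: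
  "1 - cmod (fourier_pmf \<nu> (2 * t)) \<le> 4 * (1 - cmod (fourier_pmf \<nu> t))"
proof -
  define F where "F = fourier_pmf \<nu> t"
  define F2 where "F2 = fourier_pmf \<nu> (2 * t)"
  define c where "c = (if F = 0 then 1 else cnj F / complex_of_real (cmod F))"
  define e where "e k = exp (2 * pi * \<i> * of_int k * complex_of_real t)" for k :: int
  have c_unit: "cmod c = 1" unfolding c_def by (simp add: norm_divide)
  have c_rotates: "c * F = complex_of_real (cmod F)"
    unfolding c_def using complex_norm_square by (auto simp: power2_eq_square field_simps)
  have e_double: "exp (2 * pi * \<i> * of_int k * complex_of_real (2 * t)) = e k ^ 2" for k
    unfolding e_def by (simp add: exp_double[symmetric] algebra_simps)
  have sum_t: "((\<lambda>k. pmf \<nu> k * Re (c * e k)) has_sum cmod F) UNIV"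
    using has_sum_Re[OF has_sum_cmult_right[OF fourier_pmf_has_sum[of \<nu> t], of c]] c_rotates
    unfolding F_def e_def by (simp add: algebra_simps)
  have sum_2t: "((\<lambda>k. pmf \<nu> k * Re ((c * e k)\<^sup>2)) has_sum Re (c\<^sup>2 * F2)) UNIV"
    using has_sum_Re[OF has_sum_cmult_right[OF fourier_pmf_has_sum[of \<nu> "2 * t"], of "c\<^sup>2"]]
    unfolding F2_def e_double by (simp add: algebra_simps power_mult_distrib)
  have "1 - Re (c\<^sup>2 * F2) \<le> 4 * (1 - cmod F)"
  proof (rule has_sum_mono[OF has_sum_diff[OF pmf_has_sum_1 sum_2t]
                              has_sum_cmult_right[OF has_sum_diff[OF pmf_has_sum_1 sum_t]]])
    fix k :: int
    have "cmod (c * e k) = 1" using c_unit norm_character[of k t] by (simp add: norm_mult e_def)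
    then have "pmf \<nu> k * (1 - Re ((c * e k)\<^sup>2)) \<le> pmf \<nu> k * (4 * (1 - Re (c * e k)))"
      by (intro mult_left_mono unit_complex_doubling) simp_all
    then show "pmf \<nu> k - pmf \<nu> k * Re ((c * e k)\<^sup>2) \<le> 4 * (pmf \<nu> k - pmf \<nu> k * Re (c * e k))"
      by (simp add: algebra_simps)
  qed
  moreover have "Re (c\<^sup>2 * F2) \<le> cmod F2"
    using complex_Re_le_cmod[of "c\<^sup>2 * F2"] c_unit by (simp add: norm_mult norm_power)
  ultimately show ?thesis unfolding F_def F2_def by linarith
qed

text \<open>A function with g(2t) <= 4 g(t) that is at least \<eta> on the annulus
  1/4 < |s| <= 1/2 satisfies g(t) >= \<eta> t^2 on |t| <= 1/2.  Induction on n covers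
  (1/2)^(n+2) < |t| <= 1/2: a point not yet covered is doubled into the covered range.\<close>
lemma quadratic_lower_bound_from_doubling:
  fixes g :: "real \<Rightarrow> real"
  assumes doubling: "\<And>t. g (2 * t) \<le> 4 * g t"
    and annulus: "\<And>s. 1/4 < \<bar>s\<bar> \<Longrightarrow> \<bar>s\<bar> \<le> 1/2 \<Longrightarrow> \<eta> \<le> g s"
    and "\<eta> \<ge> 0" and "\<bar>t\<bar> \<le> 1/2"
  shows "\<eta> * t\<^sup>2 \<le> g t"
proof -
  have dyadic: "(1/2)^(n+2) < \<bar>t\<bar> \<Longrightarrow> \<bar>t\<bar> \<le> 1/2 \<Longrightarrow> \<eta> * t\<^sup>2 \<le> g t" for n t
  proof (induction n arbitrary: t)
    case 0
    then have "t\<^sup>2 \<le> 1" using abs_le_square_iff[of t 1] by simp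
    then have "\<eta> * t\<^sup>2 \<le> \<eta>" using \<open>\<eta> \<ge> 0\<close> by (simp add: mult_left_le)
    also have "\<eta> \<le> g t" using 0 by (intro annulus) (auto simp: power2_eq_square)
    finally show ?case .
  next
    case (Suc n)
    show ?case
    proof (cases "(1/2)^(n+2) < \<bar>t\<bar>")
      case True
      then show ?thesis using Suc by blast
    next
      case False
      have "((1::real)/2)^(n+2) \<le> 1/4" by (simp add: power_add power_le_one)
      then have "\<eta> * (2 * t)\<^sup>2 \<le> g (2 * t)" using Suc False by (intro Suc.IH) auto
      then show ?thesis using doubling[of t] by (simp add: power_mult_distrib)
    qed
  qed
  show ?thesis
  proof (cases "t = 0")
    case True
    then show ?thesis using doubling[of 0] by simp
  next
    case False
    then obtain n where n: "(1/2::real)^n < \<bar>t\<bar>"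
      using real_arch_pow_inv[of "\<bar>t\<bar>" "1/2"] by auto
    have "(1/2::real)^(n+2) \<le> (1/2)^n" by (rule power_decreasing) auto
    then show ?thesis using dyadic[of n t] n \<open>\<bar>t\<bar> \<le> 1/2\<close> by auto
  qed
qed

lemma annulus_gap_imp_gaussian_bound:
  assumes gap: "\<And>s. 1/4 < \<bar>s\<bar> \<Longrightarrow> \<bar>s\<bar> \<le> 1/2 \<Longrightarrow> cmod (fourier_pmf \<nu> s) \<le> a"
    and "a \<le> 1" and "\<bar>t\<bar> \<le> 1/2"
  shows "cmod (fourier_pmf \<nu> t) \<le> exp (- (1 - a) * t\<^sup>2)"
proof -
  have "(1 - a) * t\<^sup>2 \<le> 1 - cmod (fourier_pmf \<nu> t)"
    using assms by (intro quadratic_lower_bound_from_doubling fourier_pmf_doubling) force+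
  then have "cmod (fourier_pmf \<nu> t) \<le> 1 + (- (1 - a) * t\<^sup>2)" by linarith
  also have "\<dots> \<le> exp (- (1 - a) * t\<^sup>2)" by (rule exp_ge_add_one_self)
  finally show ?thesis .
qed

text \<open>Conversely a Gaussian bound on the period [-1/2, 1/2) keeps |F| below
  exp(-C \<delta>^2) away from the origin; periodicity covers the point t = 1/2.\<close>
lemma gaussian_bound_imp_gap:
  assumes gauss: "\<And>t. t \<in> {-1/2..<1/2} \<Longrightarrow> cmod (fourier_pmf \<nu> t) \<le> exp (- C * t\<^sup>2)"
    and "C > 0" and "\<delta> > 0" and t: "\<delta> < \<bar>t\<bar>" "\<bar>t\<bar> \<le> 1/2"
  shows "cmod (fourier_pmf \<nu> t) \<le> exp (- C * \<delta>\<^sup>2)"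
proof -
  have "cmod (fourier_pmf \<nu> t) \<le> exp (- C * t\<^sup>2)"
  proof (cases "t = 1/2")
    case True
    then have "t = -1/2 + 1" by simp
    then have "fourier_pmf \<nu> t = fourier_pmf \<nu> (-1/2)" by (simp only: fourier_pmf_periodic)
    moreover have "t\<^sup>2 = (-1/2)\<^sup>2" using True by simp
    ultimately show ?thesis using gauss[of "-1/2"] by simp
  next
    case False
    then have "t \<in> {-1/2..<1/2}" using t by auto
    then show ?thesis by (rule gauss)
  qed
  also have "\<dots> \<le> exp (- C * \<delta>\<^sup>2)"
    using abs_le_square_iff[of \<delta> t] t \<open>\<delta> > 0\<close> \<open>C > 0\<close> by simp
  finally show ?thesis .
qed

definition fourier_sup_away :: "int pmf \<Rightarrow> real \<Rightarrow> ereal" where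
  "fourier_sup_away \<nu> \<delta> = (SUP t\<in>{t. \<delta> < \<bar>t\<bar> \<and> \<bar>t\<bar> \<le> 1/2}. ereal (cmod (fourier_pmf \<nu> t)))"

lemma fourier_sup_away_upper:
  "\<delta> < \<bar>t\<bar> \<Longrightarrow> \<bar>t\<bar> \<le> 1/2 \<Longrightarrow> ereal (cmod (fourier_pmf \<nu> t)) \<le> fourier_sup_away \<nu> \<delta>"
  unfolding fourier_sup_away_def by (intro SUP_upper) auto

text \<open>Direction (1) => (2): the limsup at \<delta> = 1/4 gives a uniform gap a < 1 for
  all large n, and the single-measure estimate applies with C = 1 - a.\<close>
lemma limsup_gap_imp_gaussian_bound:
  assumes "limsup (\<lambda>n. fourier_sup_away (\<nu> n) (1/4)) < 1"
  shows "\<exists>C>0. \<exists>N0. \<forall>n>N0. \<forall>t\<in>{-1/2..<1/2::real}.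
           cmod (fourier_pmf (\<nu> n) t) \<le> exp (- C * t\<^sup>2)"
proof -
  obtain a where lim: "limsup (\<lambda>n. fourier_sup_away (\<nu> n) (1/4)) < ereal a" and "ereal a < 1"
    using ereal_dense2[OF assms] by blast
  then have "a < 1" by simp
  obtain N where N: "\<And>n. n \<ge> N \<Longrightarrow> fourier_sup_away (\<nu> n) (1/4) < ereal a"
    using Limsup_lessD[OF lim] unfolding eventually_sequentially by blast
  have "cmod (fourier_pmf (\<nu> n) t) \<le> exp (- (1 - a) * t\<^sup>2)" if "n > N" "\<bar>t\<bar> \<le> 1/2" for n t
  proof (rule annulus_gap_imp_gaussian_bound[OF _ _ that(2)])
    fix s :: real assume "1/4 < \<bar>s\<bar>" "\<bar>s\<bar> \<le> 1/2"
    then have "ereal (cmod (fourier_pmf (\<nu> n) s)) < ereal a"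
      using fourier_sup_away_upper N[of n] that(1) by (meson less_imp_le order_le_less_trans)
    then show "cmod (fourier_pmf (\<nu> n) s) \<le> a" by simp
  qed (use \<open>a < 1\<close> in simp)
  then show ?thesis using \<open>a < 1\<close> by (intro exI[of _ "1 - a"] conjI exI[of _ N]) auto
qed

lemma gaussian_bound_imp_limsup_gap:
  assumes "C > 0" and gauss: "\<And>n t. n > N0 \<Longrightarrow> t \<in> {-1/2..<1/2::real} \<Longrightarrow>
             cmod (fourier_pmf (\<nu> n) t) \<le> exp (- C * t\<^sup>2)"
    and "\<delta> > 0"
  shows "limsup (\<lambda>n. fourier_sup_away (\<nu> n) \<delta>) < 1"
proof -
  have "fourier_sup_away (\<nu> n) \<delta> \<le> ereal (exp (- C * \<delta>\<^sup>2))" if "n > N0" for n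
    unfolding fourier_sup_away_def
  proof (intro SUP_least)
    fix t assume "t \<in> {t. \<delta> < \<bar>t\<bar> \<and> \<bar>t\<bar> \<le> 1/2}"
    then show "ereal (cmod (fourier_pmf (\<nu> n) t)) \<le> ereal (exp (- C * \<delta>\<^sup>2))"
      using gaussian_bound_imp_gap[OF gauss[OF that] \<open>C > 0\<close> \<open>\<delta> > 0\<close>] by simp
  qed
  then have "limsup (\<lambda>n. fourier_sup_away (\<nu> n) \<delta>) \<le> ereal (exp (- C * \<delta>\<^sup>2))"
    by (intro Limsup_bounded) (auto simp: eventually_sequentially intro: exI[of _ "Suc N0"])
  also have "\<dots> < 1" using \<open>C > 0\<close> \<open>\<delta> > 0\<close> by simp
  finally show ?thesis .
qed

theorem lemma2p1p7:
  fixes \<nu> :: "nat \<Rightarrow> int pmf"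
  shows "(\<forall>\<delta>::real. \<delta> > 0 \<longrightarrow>
            limsup (\<lambda>n. SUP t\<in>{t::real. \<delta> < \<bar>t\<bar> \<and> \<bar>t\<bar> \<le> 1/2}. ereal (cmod (fourier_pmf (\<nu> n) t))) < 1)
     \<longleftrightarrow>
         (\<exists>C::real. C > 0 \<and> (\<exists>N0::nat. \<forall>n>N0. \<forall>t\<in>{-1/2..<1/2::real}.
            cmod (fourier_pmf (\<nu> n) t) \<le> exp (- C * t\<^sup>2)))"
  unfolding fourier_sup_away_def[symmetric]
proof
  assume "\<forall>\<delta>>0. limsup (\<lambda>n. fourier_sup_away (\<nu> n) \<delta>) < 1"
  then show "\<exists>C>0. \<exists>N0. \<forall>n>N0. \<forall>t\<in>{-1/2..<1/2}. cmod (fourier_pmf (\<nu> n) t) \<le> exp (- C * t\<^sup>2)"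
    by (intro limsup_gap_imp_gaussian_bound) simp
next
  assume "\<exists>C>0. \<exists>N0. \<forall>n>N0. \<forall>t\<in>{-1/2..<1/2}. cmod (fourier_pmf (\<nu> n) t) \<le> exp (- C * t\<^sup>2)"
  then show "\<forall>\<delta>>0. limsup (\<lambda>n. fourier_sup_away (\<nu> n) \<delta>) < 1"
    using gaussian_bound_imp_limsup_gap by blast
qed

end
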